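(* Let $\mathbf{k}$ be a field, $p\ge3$ and $q\ge1$ integers, $S=\mathbf{k}[e_1,\dots,e_{qp}]$, and $L=\bigcap_{j=1}^{(q-1)p+1}\langle e_j,\dots,e_{j+p-2}\rangle$. Let $A'$ be the $(2q-1)\times((q-1)+(p-1)q)$ matrix with entries $A'_{i,j}=e_{pi+j-qp}$, where $e_0=1$ and $e_k=0$ for $k<0$ or $k>qp$. Let $B$ be any $(2q-1)\times(2q-1)$ submatrix of $A'$ (columns kept in their original order). Then (i) if the product $\prod_{i=1}^{2q-1}B_{i,2q-i}$ of the antidiagonal entries of $B$ is $0$, then $\det(B)=0$; and (ii) the product of the antidiagonal entries of $B$ lies in $L$. *)

theory Defs
  imports "HOL-Library.Poly_Mapping" "Jordan_Normal_Form.Determinant"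
begin

text \<open>Multivariate polynomials over a field: monomials are finitely supported
exponent vectors, polynomials are finitely supported coefficient maps.\<close>
type_synonym 'a mpoly_rep = "(nat \<Rightarrow>\<^sub>0 nat) \<Rightarrow>\<^sub>0 'a"

definition var :: "nat \<Rightarrow> 'a::field mpoly_rep" where
  "var k = Poly_Mapping.single (Poly_Mapping.single k 1) 1"

definition polyring :: "nat \<Rightarrow> 'a::field mpoly_rep set" where
  "polyring n = {f. \<forall>m \<in> Poly_Mapping.keys f. Poly_Mapping.keys m \<subseteq> {1..n}}"

definition var_ideal :: "nat \<Rightarrow> nat set \<Rightarrow> 'a::field mpoly_rep set" where
  "var_ideal n G = {f. \<exists>c. (\<forall>j\<in>G. c j \<in> polyring n) \<and> f = (\<Sum>j\<in>G. c j * var j)}"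

definition L_ideal :: "nat \<Rightarrow> nat \<Rightarrow> 'a::field mpoly_rep set" where
  "L_ideal p q = (\<Inter>j\<in>{1..(q-1)*p+1}. var_ideal (q*p) {j..j+p-2})"

definition evar :: "nat \<Rightarrow> nat \<Rightarrow> int \<Rightarrow> 'a::field mpoly_rep" where
  "evar p q k = (if k = 0 then 1 else if k < 0 \<or> k > int (q*p) then 0 else var (nat k))"

text \<open>The matrix A' with 1-based indices: A'_{i,j} = e_{pi+j-qp},
  1 \<le> i \<le> 2q-1, 1 \<le> j \<le> (q-1)+(p-1)q.\<close>
definition Aprime_entry :: "nat \<Rightarrow> nat \<Rightarrow> nat \<Rightarrow> nat \<Rightarrow> 'a::field mpoly_rep" where
  "Aprime_entry p q i j = evar p q (int p * int i + int j - int q * int p)"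

definition Aprime_ncols :: "nat \<Rightarrow> nat \<Rightarrow> nat" where
  "Aprime_ncols p q = (q - 1) + (p - 1) * q"

text \<open>The (2q-1)x(2q-1) submatrix of A' with columns c 1 < ... < c (2q-1) (1-based),
  as a Jordan_Normal_Form matrix (0-based internally): B_{i,k} = A'_{i, c k}.\<close>
definition subB :: "nat \<Rightarrow> nat \<Rightarrow> (nat \<Rightarrow> nat) \<Rightarrow> 'a::field mpoly_rep mat" where
  "subB p q c = mat (2*q-1) (2*q-1) (\<lambda>(i,k). Aprime_entry p q (i+1) (c (k+1)))"

definition antidiag_prod :: "nat \<Rightarrow> nat \<Rightarrow> (nat \<Rightarrow> nat) \<Rightarrow> 'a::field mpoly_rep" where
  "antidiag_prod p q c = (\<Prod>i\<in>{1..2*q-1}. Aprime_entry p q i (c (2*q - i)))"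

end

theory Submission
  imports Defs
begin

text \<open>Write \<open>K i\<close> for the index of the antidiagonal entry in row \<open>i\<close>, so that this entry
  is \<open>e\<^bsub>K i\<^esub>\<close>. Since the chosen columns increase strictly, \<open>K\<close> grows by at most \<open>p - 1\<close>
  from one row to the next, while \<open>K 1 \<le> p - 1\<close> and \<open>K (2q-1) \<ge> (q-1)p + 1\<close>. Hence \<open>K\<close>
  meets every window \<open>{j..j+p-2}\<close>, so some factor of the antidiagonal product is a generator
  of \<open>\<langle>e\<^sub>j,...,e\<^bsub>j+p-2\<^esub>\<rangle>\<close>. If instead some antidiagonal entry vanishes, then
  \<open>K i < 0\<close> or \<open>K i > qp\<close>; as the entries' indices increase along rows and columns, all
  entries to the upper left (resp. lower right) of it vanish too, and this
  \<open>i \<times> (2q-i)\<close> (resp. \<open>(2q-i) \<times> i\<close>) zero block forces \<open>det B = 0\<close>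
  (Frobenius--Koenig).\<close>

lemma var_neq_zero: "var k \<noteq> (0::'a::field mpoly_rep)"
  unfolding var_def by (metis keys_single empty_iff insertI1 keys_zero one_neq_zero)

lemma zero_in_polyring: "0 \<in> polyring n"
  by (simp add: polyring_def)

lemma one_in_polyring: "1 \<in> polyring n"
  by (simp add: polyring_def)

lemma var_in_polyring: "1 \<le> k \<Longrightarrow> k \<le> n \<Longrightarrow> (var k :: 'a::field mpoly_rep) \<in> polyring n"
  by (simp add: polyring_def var_def)

lemma mult_in_polyring:
  fixes f g :: "'a::field mpoly_rep"
  assumes "f \<in> polyring n" "g \<in> polyring n"
  shows "f * g \<in> polyring n"
proof (unfold polyring_def, intro CollectI ballI)
  fix m assume "m \<in> Poly_Mapping.keys (f * g)"
  then obtain a b where "m = a + b" "a \<in> Poly_Mapping.keys f" "b \<in> Poly_Mapping.keys g"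
    using keys_mult[of f g] by blast
  then show "Poly_Mapping.keys m \<subseteq> {1..n}"
    using assms keys_add[of a b] unfolding polyring_def by blast
qed

lemma prod_in_polyring: "(\<And>i. i \<in> A \<Longrightarrow> f i \<in> polyring n) \<Longrightarrow> prod f A \<in> polyring n"
  by (induction A rule: infinite_finite_induct) (simp_all add: one_in_polyring mult_in_polyring)

lemma var_mult_in_var_ideal:
  fixes f :: "'a::field mpoly_rep"
  assumes "finite G" "m \<in> G" "f \<in> polyring n"
  shows "var m * f \<in> var_ideal n G"
proof -
  have "(\<Sum>l\<in>G. (if l = m then f else 0) * var l) = (\<Sum>l\<in>G. if l = m then f * var l else 0)"
    by (rule sum.cong) auto
  also have "\<dots> = var m * f"
    using assms(1,2) by (simp add: mult.commute)
  finally show ?thesis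
    unfolding var_ideal_def using assms(3) zero_in_polyring
    by (intro CollectI exI[of _ "\<lambda>l. if l = m then f else 0"]) auto
qed

lemma evar_in_polyring: "(evar p q k :: 'a::field mpoly_rep) \<in> polyring (q*p)"
  unfolding evar_def
  by (auto simp: zero_in_polyring one_in_polyring nat_le_iff not_less intro!: var_in_polyring)

lemma evar_eq_zero_iff: "(evar p q k :: 'a::field mpoly_rep) = 0 \<longleftrightarrow> k < 0 \<or> k > int (q*p)"
  unfolding evar_def using var_neq_zero by (auto simp: mult_less_0_iff)

lemma evar_eq_var: "1 \<le> k \<Longrightarrow> k \<le> int (q*p) \<Longrightarrow> evar p q k = var (nat k)"
  unfolding evar_def by auto

text \<open>Since \<open>card R + card C > n\<close>, the graph of every permutation meets the zero block
  \<open>R \<times> C\<close>, so every term of the Leibniz expansion vanishes.\<close>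

lemma det_eq_zero_if_zero_block:
  fixes A :: "'a::comm_ring_1 mat"
  assumes A: "A \<in> carrier_mat n n" and R: "R \<subseteq> {0..<n}" and C: "C \<subseteq> {0..<n}"
    and card: "card R + card C > n"
    and zero: "\<And>r s. r \<in> R \<Longrightarrow> s \<in> C \<Longrightarrow> A $$ (r,s) = 0"
  shows "det A = 0"
proof -
  have "(\<Prod>i=0..<n. A $$ (i, \<pi> i)) = 0" if \<pi>: "\<pi> permutes {0..<n}" for \<pi>
  proof -
    have "\<exists>r\<in>R. \<pi> r \<in> C"
    proof (rule ccontr)
      assume "\<not> ?thesis"
      then have "\<pi> ` R \<subseteq> {0..<n} - C"
        using R permutes_in_image[OF \<pi>] by auto
      then have "card (\<pi> ` R) \<le> n - card C"
        using C card_mono[of "{0..<n} - C" "\<pi> ` R"] by (simp add: card_Diff_subset finite_subset)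
      moreover have "card (\<pi> ` R) = card R"
        using permutes_inj[OF \<pi>] by (simp add: card_image inj_on_subset)
      moreover have "card C \<le> n"
        using C card_mono[of "{0..<n}" C] by simp
      ultimately show False
        using card by linarith
    qed
    then obtain r where "r \<in> R" "\<pi> r \<in> C" by blast
    then show ?thesis
      using R zero by (intro prod_zero) auto
  qed
  then show ?thesis
    unfolding det_def'[OF A] by simp
qed

lemma bounded_steps_hit_window:
  fixes f :: "nat \<Rightarrow> int"
  assumes "a \<le> b" and start: "f a < j + w" and stop: "j \<le> f b"
    and steps: "\<And>i. a \<le> i \<Longrightarrow> i < b \<Longrightarrow> f (Suc i) \<le> f i + w"
  shows "\<exists>i\<in>{a..b}. j \<le> f i \<and> f i < j + w"
  using \<open>a \<le> b\<close> stop steps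
proof (induction b rule: dec_induct)
  case base
  then show ?case using start by auto
next
  case (step b)
  show ?case
  proof (cases "j \<le> f b")
    case True
    then show ?thesis using step.IH step.prems(2) by fastforce
  next
    case False
    then have "f (Suc b) < j + w"
      using step.prems(2)[of b] step.hyps by linarith
    then show ?thesis using step.prems(1) step.hyps by auto
  qed
qed

definition Aprime_index :: "nat \<Rightarrow> nat \<Rightarrow> nat \<Rightarrow> nat \<Rightarrow> int" where
  "Aprime_index p q i j = int p * int i + int j - int q * int p"

lemma Aprime_entry_eq: "Aprime_entry p q i j = evar p q (Aprime_index p q i j)"
  unfolding Aprime_entry_def Aprime_index_def ..

lemma Aprime_index_mono:
  "i \<le> i' \<Longrightarrow> j \<le> j' \<Longrightarrow> Aprime_index p q i j \<le> Aprime_index p q i' j'"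
  unfolding Aprime_index_def by (simp add: mult_left_mono add_mono)

definition antidiag_index :: "nat \<Rightarrow> nat \<Rightarrow> (nat \<Rightarrow> nat) \<Rightarrow> nat \<Rightarrow> int" where
  "antidiag_index p q c i = Aprime_index p q i (c (2*q - i))"

lemma antidiag_prod_eq:
  "antidiag_prod p q c = (\<Prod>i\<in>{1..2*q-1}. evar p q (antidiag_index p q c i))"
  unfolding antidiag_prod_def Aprime_entry_eq antidiag_index_def ..

lemma subB_carrier: "subB p q c \<in> carrier_mat (2*q-1) (2*q-1)"
  unfolding subB_def by simp

lemma subB_entry:
  "r < 2*q-1 \<Longrightarrow> s < 2*q-1 \<Longrightarrow>
    subB p q c $$ (r,s) = evar p q (Aprime_index p q (r+1) (c (s+1)))"
  unfolding subB_def Aprime_entry_eq by simp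

lemma det_subB_eq_zero_if_antidiag_prod_eq_zero:
  assumes mono: "strict_mono_on {1..2*q-1} c"
    and zero: "antidiag_prod p q c = (0 :: 'a::field mpoly_rep)"
  shows "det (subB p q c :: 'a mpoly_rep mat) = 0"
proof -
  define n where "n = 2*q - 1"
  define K where "K = antidiag_index p q c"
  obtain i where i: "i \<in> {1..n}" and K: "K i < 0 \<or> K i > int (q*p)"
    using zero unfolding antidiag_prod_eq K_def n_def by (auto simp: evar_eq_zero_iff)
  have c_le: "c (s+1) \<le> c (s'+1)" if "s \<le> s'" "s' < n" for s s'
    using strict_mono_on_leD[OF mono] that unfolding n_def by auto
  have carrier: "(subB p q c :: 'a mpoly_rep mat) \<in> carrier_mat n n"
    unfolding n_def by (rule subB_carrier)
  from K show ?thesis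
  proof
    assume "K i < 0"
    show ?thesis
    proof (rule det_eq_zero_if_zero_block[OF carrier, of "{0..<i}" "{0..<2*q-i}"])
      fix r s assume "r \<in> {0..<i}" "s \<in> {0..<2*q-i}"
      then have "Aprime_index p q (r+1) (c (s+1)) \<le> K i"
        unfolding K_def antidiag_index_def using i c_le[of s "2*q-i-1"]
        by (intro Aprime_index_mono) (auto simp: n_def Suc_diff_Suc)
      then show "(subB p q c :: 'a mpoly_rep mat) $$ (r,s) = 0"
        using \<open>K i < 0\<close> \<open>r \<in> _\<close> \<open>s \<in> _\<close> i
        by (subst subB_entry) (auto simp: n_def evar_eq_zero_iff)
    qed (use i in \<open>auto simp: n_def\<close>)
  next
    assume "K i > int (q*p)"
    show ?thesis
    proof (rule det_eq_zero_if_zero_block[OF carrier, of "{i-1..<n}" "{2*q-i-1..<n}"])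
      fix r s assume "r \<in> {i-1..<n}" "s \<in> {2*q-i-1..<n}"
      then have "K i \<le> Aprime_index p q (r+1) (c (s+1))"
        unfolding K_def antidiag_index_def using i c_le[of "2*q-i-1" s]
        by (intro Aprime_index_mono) (auto simp: n_def Suc_diff_Suc)
      then show "(subB p q c :: 'a mpoly_rep mat) $$ (r,s) = 0"
        using \<open>K i > _\<close> \<open>r \<in> _\<close> \<open>s \<in> _\<close>
        by (subst subB_entry) (auto simp: n_def evar_eq_zero_iff)
    qed (use i in \<open>auto simp: n_def\<close>)
  qed
qed

lemma antidiag_index_Suc_le:
  assumes "strict_mono_on {1..2*q-1} c" and "1 \<le> i" and "i < 2*q-1"
  shows "antidiag_index p q c (Suc i) \<le> antidiag_index p q c i + (int p - 1)"
proof -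
  have "c (2*q - Suc i) < c (2*q - i)"
    using assms by (intro strict_mono_onD[OF assms(1)]) auto
  then show ?thesis
    unfolding antidiag_index_def Aprime_index_def by (simp add: algebra_simps)
qed

lemma Aprime_ncols_eq:
  assumes "p \<ge> 1" and "q \<ge> 1"
  shows "int (Aprime_ncols p q) = int p * int q - 1"
proof -
  have "Aprime_ncols p q + 1 = p * q"
    unfolding Aprime_ncols_def using assms by (cases p; cases q) (auto simp: algebra_simps)
  then show ?thesis by (metis add_diff_cancel_right' of_nat_add of_nat_mult of_nat_1)
qed

lemma antidiag_index_first_le:
  assumes "p \<ge> 1" and "q \<ge> 1" and "c ` {1..2*q-1} \<subseteq> {1..Aprime_ncols p q}"
  shows "antidiag_index p q c 1 \<le> int p - 1"
proof -
  have "2*q-1 \<in> {1..2*q-1}"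
    using assms(2) by simp
  then have "c (2*q-1) \<in> {1..Aprime_ncols p q}"
    using assms(3) by blast
  then have "int (c (2*q-1)) \<le> int p * int q - 1"
    using Aprime_ncols_eq[OF assms(1,2)] by simp
  then show ?thesis
    unfolding antidiag_index_def Aprime_index_def by (simp add: algebra_simps)
qed

lemma antidiag_index_last_ge:
  assumes "q \<ge> 1" and "c ` {1..2*q-1} \<subseteq> {1..Aprime_ncols p q}"
  shows "antidiag_index p q c (2*q-1) \<ge> int p * int q - int p + 1"
proof -
  have "1 \<le> c 1"
    using assms by force
  moreover have "2*q - (2*q-1) = 1" "int (2*q-1) = 2 * int q - 1"
    using assms(1) by auto
  ultimately show ?thesis
    unfolding antidiag_index_def Aprime_index_def by (simp add: algebra_simps)
qed

lemma antidiag_prod_in_L_ideal: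
  assumes p: "p \<ge> 2" and q: "q \<ge> 1"
    and mono: "strict_mono_on {1..2*q-1} c"
    and c_range: "c ` {1..2*q-1} \<subseteq> {1..Aprime_ncols p q}"
  shows "(antidiag_prod p q c :: 'a::field mpoly_rep) \<in> L_ideal p q"
  unfolding L_ideal_def
proof (rule INT_I)
  fix j assume "j \<in> {1..(q-1)*p+1}"
  then have "1 \<le> j" and "int j \<le> int ((q-1)*p+1)"
    by (simp_all only: atLeastAtMost_iff of_nat_le_iff)
  moreover have "int ((q-1)*p+1) = int p * int q - int p + 1"
    using q by (simp add: of_nat_diff algebra_simps)
  ultimately have j: "1 \<le> j" "int j \<le> int p * int q - int p + 1"
    by simp_all
  define K where "K = antidiag_index p q c"
  have "\<exists>i\<in>{1..2*q-1}. int j \<le> K i \<and> K i < int j + (int p - 1)"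
  proof (rule bounded_steps_hit_window)
    show "K 1 < int j + (int p - 1)"
      using antidiag_index_first_le[of p q c] p q c_range j(1) unfolding K_def by simp
    show "int j \<le> K (2*q-1)"
      using antidiag_index_last_ge[OF q c_range] j(2) unfolding K_def by simp
    show "K (Suc i) \<le> K i + (int p - 1)" if "1 \<le> i" "i < 2*q-1" for i
      using antidiag_index_Suc_le[OF mono that] unfolding K_def .
  qed (use q in simp)
  then obtain i where i: "i \<in> {1..2*q-1}" "int j \<le> K i" "K i < int j + (int p - 1)"
    by blast
  define m where "m = nat (K i)"
  have m: "m \<in> {j..j+p-2}"
    using i p unfolding m_def by auto
  have "evar p q (K i) = (var m :: 'a mpoly_rep)"
    unfolding m_def using i j by (intro evar_eq_var) (auto simp: algebra_simps)
  then have "antidiag_prod p q c = var m * (\<Prod>k\<in>{1..2*q-1}-{i}. (evar p q (K k) :: 'a mpoly_rep))"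
    unfolding antidiag_prod_eq K_def using i(1) by (subst prod.remove) auto
  then show "antidiag_prod p q c \<in> (var_ideal (q*p) {j..j+p-2} :: 'a mpoly_rep set)"
    using m by (simp add: var_mult_in_var_ideal prod_in_polyring evar_in_polyring)
qed

theorem proposition5p3:
  fixes p q :: nat and c :: "nat \<Rightarrow> nat"
  assumes "p \<ge> 3" and "q \<ge> 1"
    and "strict_mono_on {1..2*q-1} c"
    and "c ` {1..2*q-1} \<subseteq> {1..Aprime_ncols p q}"
  shows "(antidiag_prod p q c = (0 :: 'a::field mpoly_rep) \<longrightarrow> det (subB p q c :: 'a mpoly_rep mat) = 0)
     \<and> (antidiag_prod p q c :: 'a mpoly_rep) \<in> L_ideal p q"
  using det_subB_eq_zero_if_antidiag_prod_eq_zero[OF assms(3)]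
    antidiag_prod_in_L_ideal[of p q c] assms by auto

end
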